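(* Let $\pi$ be a probability density on $\mathbb{R}^d$ with $\pi(x)>0$ for all $x$ and $\log\pi\in C^1(\mathbb{R}^d)$, and for $\lambda>0$ let $\pi^{(\lambda)}(x):=\lambda^{-1}\pi(x_1/\lambda,x_2,\dots,x_d)$. Let $\mu_0$ be a symmetric probability density on $\mathbb{R}$ and $\mu(\xi)=\prod_{i=1}^d\mu_0(\xi_i)$, and assume $\mu$ satisfies: there exists $\lambda_0>0$ such that for all $x,y\in\mathbb{R}^d$ and $\lambda<\lambda_0$, $\mu(\delta_\lambda)\ge\mu(\delta)$, where $\delta=y-x$ and $\delta_\lambda=(\lambda(y_1-x_1),y_2-x_2,\dots,y_d-x_d)$; and $\sup_{\xi_1\in\mathbb{R}}\mu_1(\xi_1)<\infty$ where $\mu_1$ is the first marginal of $\mu$. Fix $\sigma>0$ and let $P^B_\lambda$ be the Metropolis--Hastings kernel with target $\pi^{(\lambda)}$ and Barker candidate density $q^B_\lambda(x,y)=\prod_{i=1}^d\frac{2\sigma^{-1}\mu_0((y_i-x_i)/\sigma)}{1+e^{-\partial_i\log\pi^{(\lambda)}(x)(y_i-x_i)}}$; write $P^B=P^B_1$. Assume $\mathrm{Gap}(P^B)>0$. Then $\mathrm{Gap}(P^B_\lambda)=\Theta(\lambda)$ as $\lambda\downarrow0$.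
   Context: Metropolis--Hastings kernel with target $\pi$ and candidate density $q(x,y)$: propose $y\sim q(x,\cdot)$, accept with probability $\min\{1,\pi(y)q(y,x)/(\pi(x)q(x,y))\}$, else stay. $\mathrm{Gap}(P)=\inf_{f\in L^2_{0,1}(\pi)}\frac12\int (f(y)-f(x))^2\pi(dx)P(x,dy)$ with $L^2_{0,1}(\pi)=\{f:\mathbb{E}_\pi f=0,\mathrm{Var}_\pi f=1\}$. $F=\Theta(G)$ as $\lambda\downarrow0$ means $\liminf F/G>0$ and $\limsup F/G<\infty$. $\partial_i$ denotes partial derivative in the $i$-th coordinate. *)

theory Defs
  imports "HOL-Analysis.Analysis"
begin

definition upd_coord :: "real^'d \<Rightarrow> 'd \<Rightarrow> real \<Rightarrow> real^'d" where
  "upd_coord x i t = (\<chi> j. if j = i then t else x $ j)"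

definition partial :: "'d \<Rightarrow> (real^'d \<Rightarrow> real) \<Rightarrow> real^'d \<Rightarrow> real" where
  "partial i f x = deriv (\<lambda>t. f (upd_coord x i t)) (x $ i)"

definition rescale_density :: "'d \<Rightarrow> real \<Rightarrow> (real^'d \<Rightarrow> real) \<Rightarrow> real^'d \<Rightarrow> real" where
  "rescale_density k l p x = p (upd_coord x k (x $ k / l)) / l"

definition mh_accept :: "('a \<Rightarrow> real) \<Rightarrow> ('a \<Rightarrow> 'a \<Rightarrow> real) \<Rightarrow> 'a \<Rightarrow> 'a \<Rightarrow> real" where
  "mh_accept p q x y = min 1 ((p y * q y x) / (p x * q x y))"

definition mh_kernel :: "(real^'d \<Rightarrow> real) \<Rightarrow> (real^'d \<Rightarrow> real^'d \<Rightarrow> real) \<Rightarrow> real^'d \<Rightarrow> (real^'d) measure" where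
  "mh_kernel p q x = measure_of UNIV (sets (borel :: (real^'d) measure))
     (\<lambda>A. (\<integral>\<^sup>+ y\<in>A. ennreal (q x y * mh_accept p q x y) \<partial>lborel)
          + (1 - (\<integral>\<^sup>+ y. ennreal (q x y * mh_accept p q x y) \<partial>lborel)) * indicator A x)"

definition L2_01 :: "(real^'d \<Rightarrow> real) \<Rightarrow> (real^'d \<Rightarrow> real) set" where
  "L2_01 p = {f. let M = density lborel (\<lambda>x. ennreal (p x)) in
       f \<in> borel_measurable borel \<and> integrable M f \<and> integrable M (\<lambda>x. (f x)\<^sup>2) \<and>
       integral\<^sup>L M f = 0 \<and> integral\<^sup>L M (\<lambda>x. (f x - integral\<^sup>L M f)\<^sup>2) = 1}"

definition spectral_gap :: "(real^'d \<Rightarrow> real) \<Rightarrow> (real^'d \<Rightarrow> (real^'d) measure) \<Rightarrow> ennreal" where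
  "spectral_gap p P = (INF f\<in>L2_01 p. (1/2) *
     (\<integral>\<^sup>+ x. ennreal (p x) * (\<integral>\<^sup>+ y. ennreal ((f y - f x)\<^sup>2) \<partial>(P x)) \<partial>lborel))"

definition barker_q :: "real \<Rightarrow> (real \<Rightarrow> real) \<Rightarrow> (real^'d \<Rightarrow> real) \<Rightarrow> real^'d \<Rightarrow> real^'d \<Rightarrow> real" where
  "barker_q \<sigma> \<mu>0 p x y = (\<Prod>i\<in>UNIV. (2 / \<sigma> * \<mu>0 ((y $ i - x $ i) / \<sigma>)) /
       (1 + exp (- partial i (\<lambda>z. ln (p z)) x * (y $ i - x $ i))))"

end

theory Submission
  imports Defs
begin

(* Let S_l multiply the k-th coordinate by l.  Then pi_l (S_l u) = pi u / l, and f |-> f o S_l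
maps L2_01(pi_l) onto L2_01(pi).  The Barker proposal is an increment density mu((y - x)/sigma)
times a gradient factor.  Under the substitution x = S_l u, y = S_l v the gradient factor for
pi_l equals the one for pi, because the factor 1/l in the k-th partial derivative of log pi_l
cancels the factor l in y_k - x_k; only the increment density is now evaluated at the squeezed
increment, where it is larger by the hypothesis on mu.  So the Dirichlet form of P^B_l at f is at
least l times that of P^B at f o S_l, whence Gap(P^B_l) >= l Gap(P^B).
Conversely, the Metropolis-Hastings rate q a is at most sup q <= (2 sup mu0 / sigma)^d, and
pi(x) q(x,y) a(x,y) <= pi(y) sup q, so every Dirichlet form is at most 4 sup q times the
Lebesgue L2 norm of f.  For f = g o S_(1/l), with one fixed g in L2_01(pi) that is also square
integrable for Lebesgue measure, this norm is l times that of g, so Gap(P^B_l) = O(l). *)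

definition scale_coord :: "'d \<Rightarrow> real \<Rightarrow> real^'d \<Rightarrow> real^'d" where
  "scale_coord k l u = upd_coord u k (l * u $ k)"

lemma scale_coord_nth: "scale_coord k l u $ i = (if i = k then l * u $ k else u $ i)"
  by (simp add: scale_coord_def upd_coord_def)

lemma scale_coord_1 [simp]: "scale_coord k 1 u = u"
  by (simp add: vec_eq_iff scale_coord_nth)

lemma scale_coord_inverse:
  assumes "l \<noteq> 0"
  shows "scale_coord k l (scale_coord k (1/l) x) = x" and "scale_coord k (1/l) (scale_coord k l x) = x"
  using assms by (auto simp: vec_eq_iff scale_coord_nth)

lemma linear_scale_coord: "linear (scale_coord k l)"
  by (rule linearI) (auto simp: vec_eq_iff scale_coord_nth algebra_simps)

lemma scale_coord_axis: "scale_coord k l (axis i 1) = (if i = k then l else 1) *\<^sub>R axis i 1"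
  by (auto simp: vec_eq_iff scale_coord_nth axis_def)

lemma borel_measurable_scale_coord [measurable]: "scale_coord k l \<in> borel_measurable borel"
  using linear_scale_coord
  by (intro borel_measurable_continuous_onI linear_continuous_on) (simp add: linear_conv_bounded_linear)

lemma scale_coord_eq_sum_Basis:
  fixes u :: "real^'d::finite"
  shows "scale_coord k l u = (\<Sum>j\<in>Basis. ((if j = axis k 1 then l else 1) * (u \<bullet> j)) *\<^sub>R j)"
  by (subst eq_commute, subst euclidean_representation_sum)
     (auto simp: Basis_vec_def inner_axis scale_coord_nth axis_eq_axis)

lemma lborel_eq_density_distr_scale_coord:
  fixes k :: "'d::finite"
  assumes "l > 0"
  shows "lborel = density (distr lborel borel (scale_coord k l)) (\<lambda>_. ennreal l)"
proof -
  define c where "c j = (if j = axis k 1 then l else 1)" for j :: "real^'d"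
  have "(\<Prod>j\<in>Basis. \<bar>c j\<bar>) = (\<Prod>j\<in>Basis. c j)"
    using assms by (intro prod.cong) (auto simp: c_def)
  also have "\<dots> = l"
    unfolding c_def by (subst prod.delta) auto
  finally have det: "(\<Prod>j\<in>Basis. \<bar>c j\<bar>) = l" .
  have map: "(\<lambda>x. 0 + (\<Sum>j\<in>Basis. (c j * (x \<bullet> j)) *\<^sub>R j)) = scale_coord k l"
    by (rule ext) (simp add: c_def scale_coord_eq_sum_Basis)
  have "\<And>j. j \<in> Basis \<Longrightarrow> c j \<noteq> 0"
    using assms by (auto simp: c_def)
  from lborel_affine_euclidean[where t = 0 and c = c, OF this] show ?thesis
    unfolding map det .
qed

lemma nn_integral_scale_coord:
  fixes k :: "'d::finite" and h :: "real^'d \<Rightarrow> ennreal"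
  assumes l: "l > 0" and [measurable]: "h \<in> borel_measurable borel"
  shows "(\<integral>\<^sup>+x. h x \<partial>lborel) = ennreal l * (\<integral>\<^sup>+u. h (scale_coord k l u) \<partial>lborel)"
proof -
  have "(\<integral>\<^sup>+x. h x \<partial>lborel)
      = (\<integral>\<^sup>+x. h x \<partial>density (distr lborel borel (scale_coord k l)) (\<lambda>_. ennreal l))"
    by (subst lborel_eq_density_distr_scale_coord[OF l, of k]) (rule refl)
  also have "\<dots> = (\<integral>\<^sup>+u. ennreal l * h (scale_coord k l u) \<partial>lborel)"
    by (simp add: nn_integral_density nn_integral_distr)
  also have "\<dots> = ennreal l * (\<integral>\<^sup>+u. h (scale_coord k l u) \<partial>lborel)"
    by (rule nn_integral_cmult) simp
  finally show ?thesis .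
qed

lemma rescale_density_eq: "rescale_density k l p x = p (scale_coord k (1/l) x) / l"
  by (simp add: rescale_density_def scale_coord_def)

lemma rescale_density_1 [simp]: "rescale_density k 1 p = p"
  by (simp add: fun_eq_iff rescale_density_eq)

lemma rescale_density_scale_coord: "l \<noteq> 0 \<Longrightarrow> rescale_density k l p (scale_coord k l u) = p u / l"
  by (simp add: rescale_density_eq scale_coord_inverse)

lemma borel_measurable_rescale_density [measurable]:
  assumes [measurable]: "p \<in> borel_measurable borel"
  shows "rescale_density k l p \<in> borel_measurable borel"
  unfolding rescale_density_eq[abs_def] by measurable

lemma nn_integral_rescale_density:
  fixes p :: "real^'d::finite \<Rightarrow> real"
  assumes [measurable]: "p \<in> borel_measurable borel" and l: "l > 0"
  shows "(\<integral>\<^sup>+x. ennreal (rescale_density k l p x) \<partial>lborel) = (\<integral>\<^sup>+x. ennreal (p x) \<partial>lborel)"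
proof -
  have "(\<integral>\<^sup>+x. ennreal (rescale_density k l p x) \<partial>lborel)
      = (\<integral>\<^sup>+u. ennreal l * ennreal (rescale_density k l p (scale_coord k l u)) \<partial>lborel)"
    by (subst nn_integral_scale_coord[OF l]) (auto simp: nn_integral_cmult)
  also have "\<dots> = (\<integral>\<^sup>+u. ennreal (p u) \<partial>lborel)"
    using l by (intro nn_integral_cong) (simp add: rescale_density_scale_coord ennreal_mult'[symmetric])
  finally show ?thesis .
qed

lemma distr_density_scale_coord:
  fixes p :: "real^'d::finite \<Rightarrow> real"
  assumes [measurable]: "p \<in> borel_measurable borel" and l: "l > 0"
  shows "distr (density lborel (\<lambda>x. ennreal (p x))) borel (scale_coord k l)
       = density lborel (\<lambda>x. ennreal (rescale_density k l p x))"
proof (rule measure_eqI)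
  fix A assume "A \<in> sets (distr (density lborel (\<lambda>x. ennreal (p x))) borel (scale_coord k l))"
  then have [measurable]: "A \<in> sets borel" by simp
  have "emeasure (distr (density lborel (\<lambda>x. ennreal (p x))) borel (scale_coord k l)) A
      = (\<integral>\<^sup>+u. ennreal (p u) * indicator A (scale_coord k l u) \<partial>lborel)"
    using measurable_sets[OF borel_measurable_scale_coord, of A k l]
    by (subst emeasure_distr, simp, simp, subst emeasure_density)
       (auto intro!: nn_integral_cong split: split_indicator)
  also have "\<dots> = (\<integral>\<^sup>+u. ennreal l * (ennreal (rescale_density k l p (scale_coord k l u))
                         * indicator A (scale_coord k l u)) \<partial>lborel)"
    using l by (intro nn_integral_cong)
      (simp add: rescale_density_scale_coord mult.assoc[symmetric] ennreal_mult'[symmetric])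
  also have "\<dots> = (\<integral>\<^sup>+x. ennreal (rescale_density k l p x) * indicator A x \<partial>lborel)"
    by (subst nn_integral_scale_coord[OF l]) (auto simp: nn_integral_cmult)
  finally show "emeasure (distr (density lborel (\<lambda>x. ennreal (p x))) borel (scale_coord k l)) A
      = emeasure (density lborel (\<lambda>x. ennreal (rescale_density k l p x))) A"
    by (simp add: emeasure_density)
qed simp

lemma L2_01_rescale_density_iff:
  fixes p :: "real^'d::finite \<Rightarrow> real"
  assumes [measurable]: "p \<in> borel_measurable borel" "f \<in> borel_measurable borel" and l: "l > 0"
  shows "f \<in> L2_01 (rescale_density k l p) \<longleftrightarrow> (\<lambda>u. f (scale_coord k l u)) \<in> L2_01 p"
proof -
  define M where "M = density lborel (\<lambda>x. ennreal (p x))"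
  have S: "scale_coord k l \<in> measurable M borel"
    unfolding M_def by simp
  have "density lborel (\<lambda>x. ennreal (rescale_density k l p x)) = distr M borel (scale_coord k l)"
    unfolding M_def by (rule distr_density_scale_coord[symmetric, OF _ l]) simp
  moreover have "integrable (distr M borel (scale_coord k l)) h \<longleftrightarrow> integrable M (\<lambda>u. h (scale_coord k l u))"
    and "integral\<^sup>L (distr M borel (scale_coord k l)) h = integral\<^sup>L M (\<lambda>u. h (scale_coord k l u))"
    if [measurable]: "h \<in> borel_measurable borel" for h :: "real^'d \<Rightarrow> real"
    by (auto intro!: integrable_distr_eq[OF S] integral_distr[OF S])
  ultimately show ?thesis
    unfolding L2_01_def Let_def M_def[symmetric] by simp
qed

lemma upd_coord_eq_add_axis: "upd_coord x i t = x + (t - x $ i) *\<^sub>R axis i 1"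
  by (auto simp: vec_eq_iff upd_coord_def axis_def)

lemma upd_coord_same: "upd_coord x i (x $ i) = x"
  by (auto simp: vec_eq_iff upd_coord_def)

lemma has_real_derivative_upd_coord:
  assumes f': "\<And>z. (f has_derivative f' z) (at z)"
  shows "((\<lambda>t. f (upd_coord x i t)) has_real_derivative f' (upd_coord x i t) (axis i 1)) (at t)"
proof -
  have "((\<lambda>t. upd_coord x i t) has_derivative (\<lambda>h. h *\<^sub>R axis i 1)) (at t)"
    unfolding upd_coord_eq_add_axis[abs_def] by (auto intro!: derivative_eq_intros)
  from has_derivative_compose[OF this f'] have
    "((\<lambda>t. f (upd_coord x i t)) has_derivative (\<lambda>h. f' (upd_coord x i t) (h *\<^sub>R axis i 1))) (at t)"
    by (simp add: o_def)
  moreover have "linear (f' (upd_coord x i t))"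
    using f' has_derivative_linear by blast
  ultimately have "((\<lambda>t. f (upd_coord x i t)) has_derivative (\<lambda>h. h * f' (upd_coord x i t) (axis i 1))) (at t)"
    by (simp add: linear_scale)
  then show ?thesis
    by (simp add: has_field_derivative_def mult.commute[of _ "f' _ _"])
qed

lemma partial_eq_derivative:
  assumes "\<And>z. (f has_derivative f' z) (at z)"
  shows "partial i f x = f' x (axis i 1)"
  unfolding partial_def
  using DERIV_imp_deriv[OF has_real_derivative_upd_coord[OF assms, of x i "x $ i"]]
  by (simp add: upd_coord_same)

lemma borel_measurable_partial:
  assumes "\<And>x. (f has_derivative blinfun_apply (D x)) (at x)" and "continuous_on UNIV D"
  shows "partial i f \<in> borel_measurable borel"
proof -
  have "partial i f = (\<lambda>x. D x (axis i 1))"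
    using partial_eq_derivative[OF assms(1)] by auto
  moreover have "continuous_on UNIV (\<lambda>x. D x (axis i 1))"
    by (intro blinfun.continuous_on assms(2) continuous_intros)
  ultimately show ?thesis
    by (simp add: borel_measurable_continuous_onI)
qed

lemma partial_ln_rescale_density:
  fixes p :: "real^'d::finite \<Rightarrow> real"
  assumes pos: "\<And>x. p x > 0" and D: "\<And>x. ((\<lambda>z. ln (p z)) has_derivative blinfun_apply (D x)) (at x)"
    and l: "l > 0"
  shows "partial i (\<lambda>z. ln (rescale_density k l p z)) z
     = (if i = k then 1/l else 1) * partial i (\<lambda>z. ln (p z)) (scale_coord k (1/l) z)"
proof -
  have ln_rescale: "(\<lambda>z. ln (rescale_density k l p z)) = (\<lambda>z. ln (p (scale_coord k (1/l) z)) - ln l)"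
    using pos l by (intro ext) (simp add: rescale_density_eq ln_div less_imp_neq[symmetric])
  have deriv: "((\<lambda>z. ln (p (scale_coord k (1/l) z)) - ln l) has_derivative
                   (\<lambda>h. D (scale_coord k (1/l) z) (scale_coord k (1/l) h))) (at z)" for z
  proof -
    have "bounded_linear (scale_coord k (1/l))"
      using linear_scale_coord by (simp add: linear_conv_bounded_linear)
    from has_derivative_compose[OF bounded_linear_imp_has_derivative[OF this] D]
    have "((\<lambda>z. ln (p (scale_coord k (1/l) z))) has_derivative
             (\<lambda>h. D (scale_coord k (1/l) z) (scale_coord k (1/l) h))) (at z)"
      by (simp add: o_def)
    from has_derivative_diff[OF this has_derivative_const[of "ln l"]] show ?thesis
      by simp
  qed
  show ?thesis
    unfolding ln_rescale partial_eq_derivative[OF deriv] partial_eq_derivative[OF D] scale_coord_axis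
    by (simp add: blinfun.scaleR_right)
qed

definition mh_rate :: "('a \<Rightarrow> real) \<Rightarrow> ('a \<Rightarrow> 'a \<Rightarrow> real) \<Rightarrow> 'a \<Rightarrow> 'a \<Rightarrow> real" where
  "mh_rate p q x y = q x y * mh_accept p q x y"

lemma mh_rate_eq_min:
  assumes "p x > 0" "p y \<ge> 0" "q x y \<ge> 0" "q y x \<ge> 0"
  shows "mh_rate p q x y = min (q x y) (p y * q y x / p x)"
proof (cases "q x y = 0")
  case False
  with assms have "q x y > 0" by simp
  with assms show ?thesis
    by (simp add: mh_rate_def mh_accept_def min_mult_distrib_left field_simps)
qed (use assms in \<open>simp add: mh_rate_def\<close>)

lemma mh_rate_bounds:
  assumes "p x > 0" "p y > 0" "q x y \<ge> 0" "q y x \<ge> 0"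
  shows "mh_rate p q x y \<ge> 0" and "mh_rate p q x y \<le> q x y"
    and "p x * mh_rate p q x y \<le> p y * q y x"
proof -
  have ratio: "p y * q y x / p x \<ge> 0"
    using assms by simp
  show "mh_rate p q x y \<ge> 0" and "mh_rate p q x y \<le> q x y"
    using assms ratio by (simp_all add: mh_rate_eq_min)
  have "p x * mh_rate p q x y \<le> p x * (p y * q y x / p x)"
    using assms by (intro mult_left_mono) (simp_all add: mh_rate_eq_min)
  then show "p x * mh_rate p q x y \<le> p y * q y x"
    using assms by simp
qed

lemma mh_rate_factor:
  assumes "p x > 0" "p y > 0" "a \<ge> 0" "b\<^sub>1 > 0" "b\<^sub>2 > 0"
    and "q x y = a * b\<^sub>1" "q y x = a * b\<^sub>2"
  shows "mh_rate p q x y = a * min b\<^sub>1 (p y * b\<^sub>2 / p x)"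
proof -
  have "mh_rate p q x y = min (a * b\<^sub>1) (a * (p y * b\<^sub>2 / p x))"
    using assms by (simp add: mh_rate_eq_min mult.left_commute)
  with assms show ?thesis
    by (simp add: min_mult_distrib_left)
qed

lemma sets_mh_kernel [simp, measurable_cong]:
  "sets (mh_kernel p q x) = sets (borel :: (real^'d::finite) measure)"
proof -
  have "sigma_algebra UNIV (sets (borel :: (real^'d) measure))"
    using sets.sigma_algebra_axioms[of borel] by simp
  then show ?thesis
    unfolding mh_kernel_def by (rule sigma_algebra.sets_measure_of_eq)
qed

lemma emeasure_mh_kernel:
  fixes p :: "real^'d::finite \<Rightarrow> real"
  assumes [measurable]: "(\<lambda>y. mh_rate p q x y) \<in> borel_measurable borel" and A: "A \<in> sets borel"
  shows "emeasure (mh_kernel p q x) A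
       = emeasure (density lborel (\<lambda>y. ennreal (mh_rate p q x y))) A
         + (1 - (\<integral>\<^sup>+y. ennreal (mh_rate p q x y) \<partial>lborel)) * indicator A x"
proof -
  define N where "N = density lborel (\<lambda>y. ennreal (mh_rate p q x y))"
  define c where "c = 1 - (\<integral>\<^sup>+y. ennreal (mh_rate p q x y) \<partial>lborel)"
  define \<mu> where "\<mu> A = (\<integral>\<^sup>+y\<in>A. ennreal (mh_rate p q x y) \<partial>lborel) + c * indicator A x" for A
  have \<mu>_eq: "\<mu> A = emeasure N A + c * indicator A x" if "A \<in> sets borel" for A
    using that by (simp add: \<mu>_def N_def emeasure_density)
  have "countably_additive (sets borel) \<mu>"
    unfolding countably_additive_def
  proof (intro allI impI)
    fix A :: "nat \<Rightarrow> (real^'d) set"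
    assume A: "range A \<subseteq> sets borel" "disjoint_family A" "\<Union> (range A) \<in> sets borel"
    have "(\<Sum>i. \<mu> (A i)) = (\<Sum>i. emeasure N (A i)) + (\<Sum>i. c * indicator (A i) x)"
      using A(1) by (subst suminf_add) (auto simp: \<mu>_eq intro!: suminf_cong)
    also have "\<dots> = \<mu> (\<Union> (range A))"
      using A by (subst suminf_emeasure) (auto simp: N_def suminf_indicator \<mu>_eq)
    finally show "(\<Sum>i. \<mu> (A i)) = \<mu> (\<Union> (range A))" .
  qed
  moreover have "positive (sets borel) \<mu>"
    unfolding positive_def \<mu>_def by simp
  moreover have "mh_kernel p q x = measure_of UNIV (sets borel) \<mu>"
    unfolding mh_kernel_def \<mu>_def[abs_def] c_def mh_rate_def by simp
  ultimately have "emeasure (mh_kernel p q x) A = \<mu> A"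
    using emeasure_measure_of_sigma[OF _ _ _ A] sets.sigma_algebra_axioms[of borel] by simp
  with A show ?thesis
    by (simp add: \<mu>_eq N_def c_def)
qed

lemma nn_integral_mh_kernel:
  fixes p :: "real^'d::finite \<Rightarrow> real"
  assumes [measurable]: "(\<lambda>y. mh_rate p q x y) \<in> borel_measurable borel"
    and [measurable]: "g \<in> borel_measurable borel" and g0: "g x = 0"
  shows "(\<integral>\<^sup>+y. g y \<partial>mh_kernel p q x) = (\<integral>\<^sup>+y. g y * ennreal (mh_rate p q x y) \<partial>lborel)"
proof -
  define N where "N = density lborel (\<lambda>y. ennreal (mh_rate p q x y))"
  define C where "C = - {x}"
  have [measurable]: "C \<in> sets borel"
    unfolding C_def by auto
  have restrict: "density (mh_kernel p q x) (indicator C) = density N (indicator C)"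
  proof (rule measure_eqI)
    fix A assume "A \<in> sets (density (mh_kernel p q x) (indicator C))"
    then have [measurable]: "A \<in> sets borel" by simp
    have "emeasure (density (mh_kernel p q x) (indicator C)) A = emeasure (mh_kernel p q x) (C \<inter> A)"
      by (rule emeasure_restricted) auto
    also have "\<dots> = emeasure N (C \<inter> A)"
      by (subst emeasure_mh_kernel) (auto simp: N_def C_def)
    also have "\<dots> = emeasure (density N (indicator C)) A"
      by (rule emeasure_restricted[symmetric]) (auto simp: N_def)
    finally show "emeasure (density (mh_kernel p q x) (indicator C)) A
                = emeasure (density N (indicator C)) A" .
  qed (simp add: N_def)
  have "(\<integral>\<^sup>+y. g y \<partial>mh_kernel p q x) = (\<integral>\<^sup>+y. g y \<partial>density (mh_kernel p q x) (indicator C))"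
    using g0 by (subst nn_integral_density) (auto intro!: nn_integral_cong simp: C_def split: split_indicator)
  also have "\<dots> = (\<integral>\<^sup>+y. indicator C y * g y \<partial>N)"
    unfolding restrict by (subst nn_integral_density) (auto simp: N_def)
  also have "\<dots> = (\<integral>\<^sup>+y. g y * ennreal (mh_rate p q x y) \<partial>lborel)"
    using g0 unfolding N_def
    by (subst nn_integral_density) (auto intro!: nn_integral_cong simp: C_def mult.commute split: split_indicator)
  finally show ?thesis .
qed

definition mh_dirichlet ::
    "(real^'d \<Rightarrow> real) \<Rightarrow> (real^'d \<Rightarrow> real^'d \<Rightarrow> real) \<Rightarrow> (real^'d \<Rightarrow> real) \<Rightarrow> ennreal" where
  "mh_dirichlet p q f =
     (\<integral>\<^sup>+x. ennreal (p x) * (\<integral>\<^sup>+y. ennreal ((f y - f x)\<^sup>2) * ennreal (mh_rate p q x y) \<partial>lborel) \<partial>lborel)"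

lemma spectral_gap_mh_kernel:
  fixes p :: "real^'d::finite \<Rightarrow> real"
  assumes "\<And>x. (\<lambda>y. mh_rate p q x y) \<in> borel_measurable borel"
  shows "spectral_gap p (mh_kernel p q) = (INF f\<in>L2_01 p. (1/2) * mh_dirichlet p q f)"
  unfolding spectral_gap_def mh_dirichlet_def
proof (rule INF_cong[OF refl])
  fix f assume "f \<in> L2_01 p"
  then have [measurable]: "f \<in> borel_measurable borel"
    by (simp add: L2_01_def Let_def)
  have "(\<integral>\<^sup>+y. ennreal ((f y - f x)\<^sup>2) \<partial>mh_kernel p q x)
      = (\<integral>\<^sup>+y. ennreal ((f y - f x)\<^sup>2) * ennreal (mh_rate p q x y) \<partial>lborel)" for x
    using assms by (intro nn_integral_mh_kernel) auto
  then show "(1/2) * (\<integral>\<^sup>+x. ennreal (p x) * (\<integral>\<^sup>+y. ennreal ((f y - f x)\<^sup>2) \<partial>mh_kernel p q x) \<partial>lborel)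
      = (1/2) * (\<integral>\<^sup>+x. ennreal (p x) *
           (\<integral>\<^sup>+y. ennreal ((f y - f x)\<^sup>2) * ennreal (mh_rate p q x y) \<partial>lborel) \<partial>lborel)"
    by simp
qed

lemma mh_dirichlet_le_nn_integral_square:
  fixes p :: "real^'d::finite \<Rightarrow> real"
  assumes pos: "\<And>x. p x > 0" and [measurable]: "p \<in> borel_measurable borel"
    and prob: "(\<integral>\<^sup>+x. ennreal (p x) \<partial>lborel) = 1"
    and [measurable]: "\<And>x. (\<lambda>y. mh_rate p q x y) \<in> borel_measurable borel"
    and q_nonneg: "\<And>x y. 0 \<le> q x y" and q_le: "\<And>x y. q x y \<le> Q"
    and [measurable]: "f \<in> borel_measurable borel"
  shows "mh_dirichlet p q f \<le> ennreal (4 * Q) * (\<integral>\<^sup>+y. ennreal ((f y)\<^sup>2) \<partial>lborel)"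
proof -
  define F where "F = (\<integral>\<^sup>+y. ennreal ((f y)\<^sup>2) \<partial>lborel)"
  define C where "C = ennreal (2 * Q)"
  have Q: "Q \<ge> 0"
    using q_nonneg q_le order_trans by blast
  have rate_nonneg: "mh_rate p q x y \<ge> 0" for x y
    using mh_rate_bounds(1)[of p x y q, OF pos pos q_nonneg q_nonneg] .
  have rate_le: "mh_rate p q x y \<le> Q" for x y
    using mh_rate_bounds(2)[of p x y q, OF pos pos q_nonneg q_nonneg] q_le order_trans by blast
  have flow_le: "p x * mh_rate p q x y \<le> p y * Q" for x y
    using mh_rate_bounds(3)[of p x y q, OF pos pos q_nonneg q_nonneg]
      mult_left_mono[OF q_le less_imp_le[OF pos]] order_trans by blast
  have pointwise: "p x * ((f y - f x)\<^sup>2 * mh_rate p q x y) \<le> 2 * Q * (f x)\<^sup>2 * p y + 2 * Q * p x * (f y)\<^sup>2"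
    for x y
  proof -
    have "2 * (f x)\<^sup>2 + 2 * (f y)\<^sup>2 - (f y - f x)\<^sup>2 = (f x + f y)\<^sup>2"
      by (simp add: power2_eq_square algebra_simps)
    then have square: "(f y - f x)\<^sup>2 \<le> 2 * (f x)\<^sup>2 + 2 * (f y)\<^sup>2"
      using zero_le_power2[of "f x + f y"] by linarith
    have "0 \<le> p x * mh_rate p q x y"
      using rate_nonneg pos[of x] by simp
    from mult_right_mono[OF square this]
    have "p x * ((f y - f x)\<^sup>2 * mh_rate p q x y)
        \<le> 2 * (f x)\<^sup>2 * (p x * mh_rate p q x y) + 2 * (f y)\<^sup>2 * (p x * mh_rate p q x y)"
      by (simp only: distrib_right mult.left_commute[of "p x"])
    also have "\<dots> \<le> 2 * (f x)\<^sup>2 * (p y * Q) + 2 * (f y)\<^sup>2 * (p x * Q)"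
      using rate_le[of x y] flow_le[of x y] pos[of x]
      by (intro add_mono mult_left_mono) auto
    finally show ?thesis
      by (simp add: ac_simps)
  qed
  have inner: "ennreal (p x) * (\<integral>\<^sup>+y. ennreal ((f y - f x)\<^sup>2) * ennreal (mh_rate p q x y) \<partial>lborel)
      \<le> C * ennreal ((f x)\<^sup>2) + C * ennreal (p x) * F" for x
  proof -
    have "ennreal (p x) * (\<integral>\<^sup>+y. ennreal ((f y - f x)\<^sup>2) * ennreal (mh_rate p q x y) \<partial>lborel)
        = (\<integral>\<^sup>+y. ennreal (p x) * (ennreal ((f y - f x)\<^sup>2) * ennreal (mh_rate p q x y)) \<partial>lborel)"
      by (rule nn_integral_cmult[symmetric]) measurable
    also have "\<dots> = (\<integral>\<^sup>+y. ennreal (p x * ((f y - f x)\<^sup>2 * mh_rate p q x y)) \<partial>lborel)"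
      using pos rate_nonneg by (intro nn_integral_cong) (simp add: ennreal_mult less_imp_le)
    also have "\<dots> \<le> (\<integral>\<^sup>+y. (C * ennreal ((f x)\<^sup>2)) * ennreal (p y) + (C * ennreal (p x)) * ennreal ((f y)\<^sup>2) \<partial>lborel)"
    proof (rule nn_integral_mono)
      fix y
      have "ennreal (p x * ((f y - f x)\<^sup>2 * mh_rate p q x y))
          \<le> ennreal (2 * Q * (f x)\<^sup>2 * p y + 2 * Q * p x * (f y)\<^sup>2)"
        by (rule ennreal_leI[OF pointwise])
      also have "\<dots> = (C * ennreal ((f x)\<^sup>2)) * ennreal (p y) + (C * ennreal (p x)) * ennreal ((f y)\<^sup>2)"
        unfolding C_def using Q pos by (simp add: ennreal_plus ennreal_mult less_imp_le)
      finally show "ennreal (p x * ((f y - f x)\<^sup>2 * mh_rate p q x y))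
          \<le> (C * ennreal ((f x)\<^sup>2)) * ennreal (p y) + (C * ennreal (p x)) * ennreal ((f y)\<^sup>2)" .
    qed
    also have "\<dots> = C * ennreal ((f x)\<^sup>2) + C * ennreal (p x) * F"
      unfolding F_def by (subst nn_integral_add) (auto simp: nn_integral_cmult prob)
    finally show ?thesis .
  qed
  have "mh_dirichlet p q f \<le> (\<integral>\<^sup>+x. C * ennreal ((f x)\<^sup>2) + (C * F) * ennreal (p x) \<partial>lborel)"
    unfolding mh_dirichlet_def by (intro nn_integral_mono order_trans[OF inner]) (simp add: ac_simps)
  also have "\<dots> = (C + C) * F"
    unfolding F_def by (subst nn_integral_add) (auto simp: nn_integral_cmult prob distrib_right)
  also have "C + C = ennreal (4 * Q)"
    using Q unfolding C_def by (simp add: ennreal_plus[symmetric])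
  finally show ?thesis
    unfolding F_def .
qed

lemma mh_dirichlet_rescale_density_ge:
  fixes p :: "real^'d::finite \<Rightarrow> real" and k :: 'd
  assumes pos: "\<And>x. p x > 0" and [measurable]: "p \<in> borel_measurable borel" and l: "l > 0"
    and rate_meas: "(\<lambda>(x, y). mh_rate (rescale_density k l p) q' x y) \<in> borel_measurable (lborel \<Otimes>\<^sub>M lborel)"
    and rate_le: "\<And>u v. mh_rate p q u v \<le> mh_rate (rescale_density k l p) q' (scale_coord k l u) (scale_coord k l v)"
    and [measurable]: "f \<in> borel_measurable borel"
  shows "ennreal l * mh_dirichlet p q (\<lambda>u. f (scale_coord k l u)) \<le> mh_dirichlet (rescale_density k l p) q' f"
proof -
  let ?p' = "rescale_density k l p" and ?S = "scale_coord k l"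
  define H where "H x y = ennreal ((f y - f x)\<^sup>2) * ennreal (mh_rate ?p' q' x y)" for x y
  have H_meas: "(\<lambda>(x, y). H x y) \<in> borel_measurable (lborel \<Otimes>\<^sub>M lborel)"
    using rate_meas unfolding H_def by measurable
  then have [measurable]: "H x \<in> borel_measurable borel" for x
    using measurable_Pair2[OF H_meas, of x] by simp
  have "(\<lambda>x. \<integral>\<^sup>+y. H x y \<partial>lborel) \<in> borel_measurable lborel"
    using H_meas by (intro lborel.borel_measurable_nn_integral) (simp add: case_prod_beta')
  then have [measurable]: "(\<lambda>x. ennreal (?p' x) * (\<integral>\<^sup>+y. H x y \<partial>lborel)) \<in> borel_measurable borel"
    by simp
  have density: "ennreal (?p' (?S u)) * (ennreal l * X) = ennreal (p u) * X" for u X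
    using l pos[of u]
    by (simp add: rescale_density_scale_coord ennreal_mult[symmetric] mult.assoc[symmetric])
  have "ennreal l * mh_dirichlet p q (\<lambda>u. f (?S u))
      \<le> ennreal l * (\<integral>\<^sup>+u. ennreal (p u) * (\<integral>\<^sup>+v. H (?S u) (?S v) \<partial>lborel) \<partial>lborel)"
    unfolding mh_dirichlet_def H_def
    by (intro mult_left_mono nn_integral_mono ennreal_leI rate_le) auto
  also have "\<dots> = ennreal l * (\<integral>\<^sup>+u. ennreal (?p' (?S u)) * (\<integral>\<^sup>+y. H (?S u) y \<partial>lborel) \<partial>lborel)"
  proof -
    have "(\<integral>\<^sup>+y. H (?S u) y \<partial>lborel) = ennreal l * (\<integral>\<^sup>+v. H (?S u) (?S v) \<partial>lborel)" for u
      by (rule nn_integral_scale_coord[OF l]) simp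
    then show ?thesis
      by (simp add: density)
  qed
  also have "\<dots> = mh_dirichlet ?p' q' f"
    unfolding mh_dirichlet_def H_def[symmetric]
    by (rule nn_integral_scale_coord[OF l, symmetric]) simp
  finally show ?thesis .
qed

lemma emeasure_density_ball_pos:
  fixes p :: "real^'d::finite \<Rightarrow> real"
  assumes pos: "\<And>x. p x > 0" and [measurable]: "p \<in> borel_measurable borel" and r: "r > 0"
  shows "emeasure (density lborel (\<lambda>x. ennreal (p x))) (ball c r) > 0"
proof (rule ccontr)
  assume "\<not> ?thesis"
  have [measurable]: "ball c r \<in> sets borel"
    by simp
  from \<open>\<not> ?thesis\<close> have "(\<integral>\<^sup>+x. ennreal (p x) * indicator (ball c r) x \<partial>lborel) = 0"
    by (simp add: emeasure_density)
  then have "AE x in lborel. ennreal (p x) * indicator (ball c r) x = 0"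
    by (subst (asm) nn_integral_0_iff_AE) auto
  then have "AE x in lborel. x \<notin> ball c r"
  proof eventually_elim
    fix x assume "ennreal (p x) * indicator (ball c r) x = 0"
    with pos[of x] show "x \<notin> ball c r"
      by (auto split: split_indicator)
  qed
  then have "emeasure lborel (ball c r) = 0"
    by (subst (asm) AE_iff_measurable[of "ball c r"]) auto
  then show False
    using content_ball_pos[OF r, of c] by (simp add: measure_def)
qed

lemma L2_01_square_integrable_exists:
  fixes p :: "real^'d::finite \<Rightarrow> real"
  assumes pos: "\<And>x. p x > 0" and p_meas [measurable]: "p \<in> borel_measurable borel"
    and prob: "(\<integral>\<^sup>+ x. ennreal (p x) \<partial>lborel) = 1"
  obtains g where "g \<in> L2_01 p" and "(\<integral>\<^sup>+u. ennreal ((g u)\<^sup>2) \<partial>lborel) < \<infinity>"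
proof -
  define M where "M = density lborel (\<lambda>x. ennreal (p x))"
  have [simp, measurable_cong]: "sets M = sets borel" and [simp]: "space M = UNIV"
    unfolding M_def by auto
  interpret finite_measure M
    by (rule finite_measureI) (simp add: M_def emeasure_density prob)
  obtain c :: "real^'d" where c: "norm c = 3"
    using vector_choose_size[of 3] by auto
  define A where "A = ball (0::real^'d) 1"
  define B where "B = ball c 1"
  have [measurable]: "A \<in> sets borel" "B \<in> sets borel"
    unfolding A_def B_def by auto
  have disjoint: "x \<notin> A \<or> x \<notin> B" for x
    using norm_triangle_ineq[of "c - x" x] c by (auto simp: A_def B_def dist_norm)
  define a where "a = measure M A"
  define b where "b = measure M B"
  have "emeasure M A > 0" "emeasure M B > 0"
    using emeasure_density_ball_pos[OF pos p_meas, where r = 1] unfolding M_def A_def B_def by auto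
  then have "a > 0" "b > 0"
    unfolding a_def b_def by (simp_all add: emeasure_eq_measure)
  define t where "t = 1 / sqrt (1/a + 1/b)"
  define g where "g x = t / a * indicator A x - t / b * indicator B x" for x
  have g2: "(g x)\<^sup>2 = (t / a)\<^sup>2 * indicator A x + (t / b)\<^sup>2 * indicator B x" for x
    using disjoint[of x] unfolding g_def by (auto simp: power2_eq_square split: split_indicator)
  have [measurable]: "g \<in> borel_measurable borel"
    unfolding g_def by measurable
  have [simp]: "integrable M (indicator A :: _ \<Rightarrow> real)" "integrable M (indicator B :: _ \<Rightarrow> real)"
    by (auto simp: emeasure_eq_measure)
  have mean: "integral\<^sup>L M g = 0"
    using \<open>a > 0\<close> \<open>b > 0\<close> unfolding g_def by (simp add: a_def[symmetric] b_def[symmetric])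
  have "integral\<^sup>L M (\<lambda>x. (g x - integral\<^sup>L M g)\<^sup>2) = (t / a)\<^sup>2 * a + (t / b)\<^sup>2 * b"
    unfolding mean by (simp add: g2 a_def b_def)
  also have "\<dots> = t\<^sup>2 * (1/a + 1/b)"
    using \<open>a > 0\<close> \<open>b > 0\<close> by (simp add: power2_eq_square field_simps)
  also have "\<dots> = 1"
  proof -
    have "1/a + 1/b > 0"
      using \<open>a > 0\<close> \<open>b > 0\<close> by (intro add_pos_pos) simp_all
    then show ?thesis
      unfolding t_def by (simp add: power_divide)
  qed
  finally have variance: "integral\<^sup>L M (\<lambda>x. (g x - integral\<^sup>L M g)\<^sup>2) = 1" .
  have "integrable M g"
    unfolding g_def by simp
  moreover have "integrable M (\<lambda>x. (g x)\<^sup>2)"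
    unfolding g2 by simp
  ultimately have g_L2: "g \<in> L2_01 p"
    using mean variance unfolding L2_01_def Let_def M_def[symmetric] by simp
  have "(\<integral>\<^sup>+u. ennreal ((g u)\<^sup>2) \<partial>lborel)
      = (\<integral>\<^sup>+u. ennreal ((t / a)\<^sup>2) * indicator A u + ennreal ((t / b)\<^sup>2) * indicator B u \<partial>lborel)"
    unfolding g2 by (intro nn_integral_cong) (auto split: split_indicator)
  also have "\<dots> = ennreal ((t / a)\<^sup>2) * emeasure lborel A + ennreal ((t / b)\<^sup>2) * emeasure lborel B"
    by (subst nn_integral_add) (auto simp: nn_integral_cmult)
  also have "\<dots> < \<infinity>"
    unfolding A_def B_def
    using emeasure_lborel_ball_finite[of "0::real^'d" 1] emeasure_lborel_ball_finite[of c 1]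
    by (simp add: ennreal_mult_less_top less_top)
  finally show ?thesis
    using g_L2 that by blast
qed

lemma borel_measurable_vec_nth [measurable]: "(\<lambda>x::real^'d::finite. x $ i) \<in> borel_measurable borel"
  by (intro borel_measurable_continuous_onI continuous_intros)

definition barker_increment :: "real \<Rightarrow> (real \<Rightarrow> real) \<Rightarrow> real^'d::finite \<Rightarrow> real" where
  "barker_increment \<sigma> \<mu>0 w = (\<Prod>i\<in>UNIV. 2 / \<sigma> * \<mu>0 (w $ i / \<sigma>))"

definition barker_bias :: "('d::finite \<Rightarrow> real^'d \<Rightarrow> real) \<Rightarrow> real^'d \<Rightarrow> real^'d \<Rightarrow> real" where
  "barker_bias g u v = (\<Prod>i\<in>UNIV. 1 / (1 + exp (- g i u * (v $ i - u $ i))))"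

lemma barker_q_factor:
  "barker_q \<sigma> \<mu>0 p u v
     = barker_increment \<sigma> \<mu>0 (v - u) * barker_bias (\<lambda>i. partial i (\<lambda>z. ln (p z))) u v"
  unfolding barker_q_def barker_increment_def barker_bias_def prod.distrib[symmetric]
  by (intro prod.cong) auto

lemma barker_bias_pos: "barker_bias g u v > 0"
  unfolding barker_bias_def by (intro prod_pos) (auto intro: add_pos_pos)

lemma barker_bias_le_1: "barker_bias g u v \<le> 1"
  unfolding barker_bias_def by (intro prod_le_1) (simp add: divide_le_eq_1 add_pos_pos)

lemma barker_increment_nonneg:
  "\<sigma> > 0 \<Longrightarrow> (\<And>t. \<mu>0 t \<ge> 0) \<Longrightarrow> barker_increment \<sigma> \<mu>0 w \<ge> 0"
  unfolding barker_increment_def by (intro prod_nonneg) auto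

lemma barker_increment_le:
  fixes w :: "real^'d::finite"
  assumes "\<sigma> > 0" "\<And>t. \<mu>0 t \<ge> 0" "\<And>t. \<mu>0 t \<le> M"
  shows "barker_increment \<sigma> \<mu>0 w \<le> (2 * M / \<sigma>) ^ CARD('d)"
proof -
  have "barker_increment \<sigma> \<mu>0 w \<le> (\<Prod>i\<in>(UNIV::'d set). 2 * M / \<sigma>)"
    unfolding barker_increment_def using assms
    by (intro prod_mono) (auto simp: divide_right_mono)
  then show ?thesis
    by simp
qed

lemma barker_increment_uminus:
  "(\<And>t. \<mu>0 (- t) = \<mu>0 t) \<Longrightarrow> barker_increment \<sigma> \<mu>0 (- w) = barker_increment \<sigma> \<mu>0 w"
  unfolding barker_increment_def by (simp add: minus_divide_left[symmetric])

lemma barker_increment_le_scale_coord: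
  fixes w :: "real^'d::finite"
  assumes "\<sigma> > 0" and mu: "\<And>w. (\<Prod>i\<in>UNIV. \<mu>0 (w $ i)) \<le> (\<Prod>i\<in>UNIV. \<mu>0 (scale_coord k l w $ i))"
  shows "barker_increment \<sigma> \<mu>0 w \<le> barker_increment \<sigma> \<mu>0 (scale_coord k l w)"
proof -
  have increment: "barker_increment \<sigma> \<mu>0 z = (2/\<sigma>) ^ CARD('d) * (\<Prod>i\<in>UNIV. \<mu>0 (((1/\<sigma>) *\<^sub>R z) $ i))"
    for z :: "real^'d"
    unfolding barker_increment_def prod.distrib by simp
  have "scale_coord k l ((1/\<sigma>) *\<^sub>R w) = (1/\<sigma>) *\<^sub>R scale_coord k l w"
    by (simp add: vec_eq_iff scale_coord_nth)
  with mu[of "(1/\<sigma>) *\<^sub>R w"] assms(1) show ?thesis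
    unfolding increment by (intro mult_left_mono) auto
qed

lemma barker_q_nonneg:
  assumes "\<sigma> > 0" "\<And>t. \<mu>0 t \<ge> 0"
  shows "barker_q \<sigma> \<mu>0 p u v \<ge> 0"
  unfolding barker_q_factor
  using barker_increment_nonneg[of \<sigma> \<mu>0 "v - u", OF assms] barker_bias_pos
  by (meson less_imp_le mult_nonneg_nonneg)

lemma barker_q_le:
  fixes p :: "real^'d::finite \<Rightarrow> real"
  assumes "\<sigma> > 0" "\<And>t. \<mu>0 t \<ge> 0" "\<And>t. \<mu>0 t \<le> M"
  shows "barker_q \<sigma> \<mu>0 p u v \<le> (2 * M / \<sigma>) ^ CARD('d)"
proof -
  let ?bias = "barker_bias (\<lambda>i. partial i (\<lambda>z. ln (p z))) u v"
  have increment: "0 \<le> barker_increment \<sigma> \<mu>0 (v - u)" "barker_increment \<sigma> \<mu>0 (v - u) \<le> (2 * M / \<sigma>) ^ CARD('d)"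
    using barker_increment_nonneg[of \<sigma> \<mu>0 "v - u", OF assms(1,2)]
      barker_increment_le[of \<sigma> \<mu>0 M "v - u", OF assms] by auto
  have "barker_increment \<sigma> \<mu>0 (v - u) * ?bias \<le> (2 * M / \<sigma>) ^ CARD('d) * 1"
    using increment barker_bias_pos[of _ u v] by (intro mult_mono barker_bias_le_1) (auto intro: less_imp_le)
  then show ?thesis
    unfolding barker_q_factor by simp
qed

lemma barker_q_rescale_density:
  fixes p :: "real^'d::finite \<Rightarrow> real"
  assumes pos: "\<And>x. p x > 0" and D: "\<And>x. ((\<lambda>z. ln (p z)) has_derivative blinfun_apply (D x)) (at x)"
    and l: "l > 0"
  shows "barker_q \<sigma> \<mu>0 (rescale_density k l p) (scale_coord k l u) (scale_coord k l v)
       = barker_increment \<sigma> \<mu>0 (scale_coord k l (v - u)) * barker_bias (\<lambda>i. partial i (\<lambda>z. ln (p z))) u v"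
  unfolding barker_q_def barker_increment_def barker_bias_def prod.distrib[symmetric]
    partial_ln_rescale_density[OF pos D l]
  using l by (intro prod.cong) (auto simp: scale_coord_inverse scale_coord_nth algebra_simps)

locale barker_scaling =
  fixes \<pi> :: "real^'d::finite \<Rightarrow> real" and D :: "real^'d \<Rightarrow> ((real^'d) \<Rightarrow>\<^sub>L real)"
    and \<mu>0 :: "real \<Rightarrow> real" and \<sigma> :: real and k :: 'd
  assumes pi_pos: "\<And>x. \<pi> x > 0" and pi_meas [measurable]: "\<pi> \<in> borel_measurable borel"
    and pi_prob: "(\<integral>\<^sup>+x. ennreal (\<pi> x) \<partial>lborel) = 1"
    and ln_pi_deriv: "\<And>x. ((\<lambda>z. ln (\<pi> z)) has_derivative blinfun_apply (D x)) (at x)"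
    and D_cont: "continuous_on UNIV D"
    and mu0_nonneg: "\<And>t. \<mu>0 t \<ge> 0" and mu0_meas [measurable]: "\<mu>0 \<in> borel_measurable borel"
    and mu0_symm: "\<And>t. \<mu>0 (- t) = \<mu>0 t" and sigma_pos: "\<sigma> > 0"
begin

abbreviation rescaled :: "real \<Rightarrow> real^'d \<Rightarrow> real" where
  "rescaled l \<equiv> rescale_density k l \<pi>"

abbreviation barker_rate :: "(real^'d \<Rightarrow> real) \<Rightarrow> real^'d \<Rightarrow> real^'d \<Rightarrow> real" where
  "barker_rate p \<equiv> mh_rate p (barker_q \<sigma> \<mu>0 p)"

abbreviation barker_gap :: "(real^'d \<Rightarrow> real) \<Rightarrow> ennreal" where
  "barker_gap p \<equiv> spectral_gap p (mh_kernel p (barker_q \<sigma> \<mu>0 p))"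

abbreviation bias :: "real^'d \<Rightarrow> real^'d \<Rightarrow> real" where
  "bias \<equiv> barker_bias (\<lambda>i. partial i (\<lambda>z. ln (\<pi> z)))"

lemma rescaled_pos: "l > 0 \<Longrightarrow> rescaled l x > 0"
  using pi_pos by (simp add: rescale_density_eq)

lemma borel_measurable_barker_rate:
  assumes l: "l > 0"
  shows "(\<lambda>(x, y). barker_rate (rescaled l) x y) \<in> borel_measurable (lborel \<Otimes>\<^sub>M lborel)"
proof -
  have [measurable]: "partial i (\<lambda>z. ln (\<pi> z)) \<in> borel_measurable borel" for i
    by (rule borel_measurable_partial[OF ln_pi_deriv D_cont])
  have [measurable]: "partial i (\<lambda>z. ln (rescaled l z)) \<in> borel_measurable borel" for i
    unfolding partial_ln_rescale_density[OF pi_pos ln_pi_deriv l, abs_def] by measurable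
  show ?thesis
    unfolding mh_rate_def mh_accept_def barker_q_def by measurable
qed

lemma borel_measurable_barker_rate_section:
  "l > 0 \<Longrightarrow> (\<lambda>y. barker_rate (rescaled l) x y) \<in> borel_measurable borel"
  using measurable_Pair2[OF borel_measurable_barker_rate, of l x] by simp

lemma barker_rate_rescaled:
  assumes l: "l > 0"
  shows "barker_rate (rescaled l) (scale_coord k l u) (scale_coord k l v)
       = barker_increment \<sigma> \<mu>0 (scale_coord k l (v - u)) * min (bias u v) (\<pi> v * bias v u / \<pi> u)"
proof -
  have "scale_coord k l (u - v) = - scale_coord k l (v - u)"
    by (simp add: vec_eq_iff scale_coord_nth algebra_simps)
  then have swap: "barker_increment \<sigma> \<mu>0 (scale_coord k l (u - v)) = barker_increment \<sigma> \<mu>0 (scale_coord k l (v - u))"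
    by (simp add: barker_increment_uminus mu0_symm)
  have "barker_rate (rescaled l) (scale_coord k l u) (scale_coord k l v)
      = barker_increment \<sigma> \<mu>0 (scale_coord k l (v - u))
        * min (bias u v) (rescaled l (scale_coord k l v) * bias v u / rescaled l (scale_coord k l u))"
    using l barker_q_rescale_density[OF pi_pos ln_pi_deriv l, of \<sigma> \<mu>0] swap
    by (intro mh_rate_factor rescaled_pos barker_bias_pos barker_increment_nonneg sigma_pos mu0_nonneg) auto
  also have "rescaled l (scale_coord k l v) * bias v u / rescaled l (scale_coord k l u) = \<pi> v * bias v u / \<pi> u"
    using l by (simp add: rescale_density_scale_coord)
  finally show ?thesis .
qed

lemma barker_rate_le_rescaled:
  assumes l: "l > 0" and mu: "\<And>w. (\<Prod>i\<in>UNIV. \<mu>0 (w $ i)) \<le> (\<Prod>i\<in>UNIV. \<mu>0 (scale_coord k l w $ i))"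
  shows "barker_rate \<pi> u v \<le> barker_rate (rescaled l) (scale_coord k l u) (scale_coord k l v)"
proof -
  have "0 < bias u v" "0 < \<pi> v * bias v u / \<pi> u"
    by (intro divide_pos_pos mult_pos_pos pi_pos barker_bias_pos)+
  then have "0 \<le> min (bias u v) (\<pi> v * bias v u / \<pi> u)"
    by simp
  with barker_increment_le_scale_coord[OF sigma_pos mu] show ?thesis
    using barker_rate_rescaled[OF l] barker_rate_rescaled[of 1] by (simp add: mult_right_mono)
qed

lemma barker_gap_le_rescaled:
  assumes l: "l > 0" and mu: "\<And>w. (\<Prod>i\<in>UNIV. \<mu>0 (w $ i)) \<le> (\<Prod>i\<in>UNIV. \<mu>0 (scale_coord k l w $ i))"
  shows "barker_gap \<pi> \<le> barker_gap (rescaled l) / ennreal l"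
proof -
  have "ennreal l * barker_gap \<pi> \<le> barker_gap (rescaled l)"
    unfolding spectral_gap_mh_kernel[OF borel_measurable_barker_rate_section[OF l]]
  proof (rule INF_greatest)
    fix f assume f: "f \<in> L2_01 (rescaled l)"
    then have [measurable]: "f \<in> borel_measurable borel"
      by (simp add: L2_01_def Let_def)
    have "ennreal l * barker_gap \<pi> \<le> ennreal l * ((1/2) * mh_dirichlet \<pi> (barker_q \<sigma> \<mu>0 \<pi>) (\<lambda>u. f (scale_coord k l u)))"
      using f L2_01_rescale_density_iff[OF pi_meas _ l] borel_measurable_barker_rate_section[of 1]
      by (intro mult_left_mono) (auto simp: spectral_gap_mh_kernel intro!: INF_lower)
    also have "\<dots> \<le> (1/2) * mh_dirichlet (rescaled l) (barker_q \<sigma> \<mu>0 (rescaled l)) f"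
      using mh_dirichlet_rescale_density_ge[OF pi_pos pi_meas l borel_measurable_barker_rate[OF l]
          barker_rate_le_rescaled[OF l mu]]
      by (simp add: mult.left_commute[of "ennreal l"] mult_left_mono)
    finally show "ennreal l * barker_gap \<pi> \<le> (1/2) * mh_dirichlet (rescaled l) (barker_q \<sigma> \<mu>0 (rescaled l)) f" .
  qed
  then have "ennreal l * barker_gap \<pi> / ennreal l \<le> barker_gap (rescaled l) / ennreal l"
    by (rule divide_right_mono_ennreal)
  then show ?thesis
    using l by (simp add: mult.commute[of "ennreal l"] mult_divide_eq_ennreal)
qed

lemma barker_gap_rescaled_bounded:
  assumes M: "\<And>t. \<mu>0 t \<le> M"
  obtains C where "C < \<infinity>" and "\<And>l. l > 0 \<Longrightarrow> barker_gap (rescaled l) / ennreal l \<le> C"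
proof -
  obtain g where g: "g \<in> L2_01 \<pi>" and g_finite: "(\<integral>\<^sup>+u. ennreal ((g u)\<^sup>2) \<partial>lborel) < \<infinity>"
    using L2_01_square_integrable_exists[OF pi_pos pi_meas pi_prob] by blast
  have [measurable]: "g \<in> borel_measurable borel"
    using g by (simp add: L2_01_def Let_def)
  define Q where "Q = (2 * M / \<sigma>) ^ CARD('d)"
  define C where "C = (1/2) * ennreal (4 * Q) * (\<integral>\<^sup>+u. ennreal ((g u)\<^sup>2) \<partial>lborel)"
  have "(1/2 :: ennreal) < \<infinity>"
    by (simp add: ennreal_divide_eq_top_iff less_top[symmetric])
  then have "C < \<infinity>"
    unfolding C_def using g_finite by (simp add: ennreal_mult_less_top)
  moreover have "barker_gap (rescaled l) / ennreal l \<le> C" if l: "l > 0" for l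
  proof -
    define f where "f x = g (scale_coord k (1/l) x)" for x
    have [measurable]: "f \<in> borel_measurable borel"
      unfolding f_def by measurable
    have "f \<in> L2_01 (rescaled l)"
      using L2_01_rescale_density_iff[OF pi_meas _ l] g l by (simp add: f_def scale_coord_inverse)
    then have "barker_gap (rescaled l) \<le> (1/2) * mh_dirichlet (rescaled l) (barker_q \<sigma> \<mu>0 (rescaled l)) f"
      unfolding spectral_gap_mh_kernel[OF borel_measurable_barker_rate_section[OF l]] by (rule INF_lower)
    also have "\<dots> \<le> (1/2) * (ennreal (4 * Q) * (\<integral>\<^sup>+x. ennreal ((f x)\<^sup>2) \<partial>lborel))"
      unfolding Q_def using l rescaled_pos pi_prob
      by (intro mult_left_mono mh_dirichlet_le_nn_integral_square borel_measurable_barker_rate_section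
            barker_q_nonneg barker_q_le sigma_pos mu0_nonneg M)
         (auto simp: nn_integral_rescale_density)
    also have "(\<integral>\<^sup>+x. ennreal ((f x)\<^sup>2) \<partial>lborel) = ennreal l * (\<integral>\<^sup>+u. ennreal ((g u)\<^sup>2) \<partial>lborel)"
      unfolding f_def using l by (subst nn_integral_scale_coord[OF l, of _ k]) (auto simp: scale_coord_inverse)
    finally have "barker_gap (rescaled l) \<le> ennreal l * C"
      unfolding C_def by (simp add: ac_simps)
    then show ?thesis
      using l by (intro divide_le_posI_ennreal) auto
  qed
  ultimately show ?thesis
    by (rule that)
qed

end

theorem theorem4p1:
  fixes \<pi> :: "real^'d \<Rightarrow> real" and \<mu>0 :: "real \<Rightarrow> real" and \<sigma> :: real and k :: 'd
  assumes pi_pos: "\<forall>x. \<pi> x > 0"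
    and pi_meas: "\<pi> \<in> borel_measurable borel"
    and pi_prob: "(\<integral>\<^sup>+ x. ennreal (\<pi> x) \<partial>lborel) = 1"
    and logpi_C1: "\<exists>D :: real^'d \<Rightarrow> ((real^'d) \<Rightarrow>\<^sub>L real).
         (\<forall>x. ((\<lambda>z. ln (\<pi> z)) has_derivative blinfun_apply (D x)) (at x)) \<and> continuous_on UNIV D"
    and mu0_nonneg: "\<forall>t. \<mu>0 t \<ge> 0"
    and mu0_meas: "\<mu>0 \<in> borel_measurable borel"
    and mu0_prob: "(\<integral>\<^sup>+ t. ennreal (\<mu>0 t) \<partial>lborel) = 1"
    and mu0_symm: "\<forall>t. \<mu>0 (- t) = \<mu>0 t"
    and mu_scale: "\<exists>l0>0. \<forall>x y :: real^'d. \<forall>l. 0 < l \<and> l < l0 \<longrightarrow>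
         (\<Prod>i\<in>UNIV. \<mu>0 ((upd_coord (y - x) k (l * (y $ k - x $ k))) $ i))
           \<ge> (\<Prod>i\<in>UNIV. \<mu>0 ((y - x) $ i))"
    and marg_bdd: "bdd_above (range \<mu>0)"
    and sigma_pos: "\<sigma> > 0"
    and gap_pos: "spectral_gap \<pi> (mh_kernel \<pi> (barker_q \<sigma> \<mu>0 \<pi>)) > 0"
  shows "Liminf (at_right 0) (\<lambda>l. spectral_gap (rescale_density k l \<pi>)
             (mh_kernel (rescale_density k l \<pi>) (barker_q \<sigma> \<mu>0 (rescale_density k l \<pi>))) / ennreal l) > 0
       \<and> Limsup (at_right 0) (\<lambda>l. spectral_gap (rescale_density k l \<pi>)
             (mh_kernel (rescale_density k l \<pi>) (barker_q \<sigma> \<mu>0 (rescale_density k l \<pi>))) / ennreal l) < \<infinity>"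
proof -
  obtain D where "barker_scaling \<pi> D \<mu>0 \<sigma>"
    using logpi_C1 assms by (auto simp: barker_scaling_def)
  then interpret barker_scaling \<pi> D \<mu>0 \<sigma> k .
  from mu_scale obtain l0 where "l0 > 0" and mu_upd: "\<forall>x y :: real^'d. \<forall>l. 0 < l \<and> l < l0 \<longrightarrow>
      (\<Prod>i\<in>UNIV. \<mu>0 ((upd_coord (y - x) k (l * (y $ k - x $ k))) $ i)) \<ge> (\<Prod>i\<in>UNIV. \<mu>0 ((y - x) $ i))"
    by blast
  have mu_le: "(\<Prod>i\<in>UNIV. \<mu>0 (w $ i)) \<le> (\<Prod>i\<in>UNIV. \<mu>0 (scale_coord k l w $ i))"
    if "0 < l" "l < l0" for l w
    using mu_upd[rule_format, of l w 0] that by (simp add: scale_coord_def)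
  have "\<forall>\<^sub>F l in at_right 0. barker_gap \<pi> \<le> barker_gap (rescaled l) / ennreal l"
    using \<open>l0 > 0\<close> barker_gap_le_rescaled mu_le unfolding eventually_at_right_field by blast
  then have "barker_gap \<pi> \<le> Liminf (at_right 0) (\<lambda>l. barker_gap (rescaled l) / ennreal l)"
    by (rule Liminf_bounded)
  moreover obtain C where "C < \<infinity>" and "\<And>l. l > 0 \<Longrightarrow> barker_gap (rescaled l) / ennreal l \<le> C"
    using marg_bdd barker_gap_rescaled_bounded by (auto simp: bdd_above_def)
  then have "\<forall>\<^sub>F l in at_right 0. barker_gap (rescaled l) / ennreal l \<le> C"
    using eventually_at_right_less[of "0::real"] by (auto elim: eventually_mono)
  then have "Limsup (at_right 0) (\<lambda>l. barker_gap (rescaled l) / ennreal l) \<le> C"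
    by (rule Limsup_bounded)
  ultimately show ?thesis
    using gap_pos \<open>C < \<infinity>\<close> by auto
qed

end
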